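(* Fix $T>0$ and $L>0$. For $t\in[0,T]$ and $x,y\in[-L,L]$ let $H_L^M(t;x,y)=\Gamma(t,x-y)-\Gamma_L^M(t;x,y)$. Then $$\int_{-L}^Ldy\,|H_L^M(t;x,y)|\le K_{t,x,L}\left[e^{-\frac{(L-x)^2}{4t}}+e^{-\frac{(L+x)^2}{4t}}\right],$$ $$\int_0^tds\int_{-L}^Ldy\,|H_L^M(s;x,y)|\le t\,K_{t,x,L}\left[e^{-\frac{(L-x)^2}{4t}}+e^{-\frac{(L+x)^2}{4t}}\right],$$ $$\int_0^tds\int_{-L}^Ldy\,[H_L^M(s;x,y)]^2\le\sqrt{\tfrac{t}{\pi}}\,K_{t,x,L}\left[e^{-\frac{(L-x)^2}{4t}}+e^{-\frac{(L+x)^2}{4t}}\right]^2.$$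
   Context: $\Gamma(t,x)=(4\pi t)^{-1/2}\exp(-x^2/(4t))$ for $t>0$. $\Gamma_L^M(t;x,y)=\sum_{m\in\mathbb Z}(-1)^m[\Gamma(t,x-y+4mL)-\Gamma(t,x+y+(4m+2)L)]$ (equivalently $\frac1L\sum_{n\ge0}e^{-\pi^2(2n+1)^2t/(16L^2)}\sin(\frac{(2n+1)\pi}{4L}(x+L))\sin(\frac{(2n+1)\pi}{4L}(y+L))$) is the Green's function of $\partial_t-\partial_x^2$ on $[-L,L]$ with mixed boundary conditions $u(t,-L)=0$, $\partial_xu(t,L)=0$. $K_{t,x,L}=\min\left(\frac12,\sqrt{t/\pi}\,\max\left(\frac1{L-x},\frac1{L+x}\right)\right)$. *)

theory Defs
  imports "HOL-Analysis.Analysis"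
begin

definition heat_kernel :: "real \<Rightarrow> real \<Rightarrow> real" where
  "heat_kernel t x = exp (- (x^2) / (4 * t)) / sqrt (4 * pi * t)"

text \<open>Green's function on [-L,L] with mixed boundary conditions (Dirichlet at -L, Neumann at L),
  given by the method of images as a sum over m in Z.\<close>
definition green_mixed :: "real \<Rightarrow> real \<Rightarrow> real \<Rightarrow> real \<Rightarrow> real" where
  "green_mixed L t x y =
     (\<Sum>\<^sub>\<infinity>m::int. (-1) powi m *
        (heat_kernel t (x - y + 4 * of_int m * L)
         - heat_kernel t (x + y + (4 * of_int m + 2) * L)))"

definition H_mixed :: "real \<Rightarrow> real \<Rightarrow> real \<Rightarrow> real \<Rightarrow> real" where
  "H_mixed L t x y = heat_kernel t (x - y) - green_mixed L t x y"

text \<open>K_{t,x,L} = min(1/2, sqrt(t/pi) max(1/(L-x), 1/(L+x))).  At x = L or x = -L one of the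
  reciprocals is +infinity in the paper, so K = 1/2 there (made explicit, since 1/0 = 0 in HOL).\<close>
definition K_const :: "real \<Rightarrow> real \<Rightarrow> real \<Rightarrow> real" where
  "K_const t x L =
     (if x = L \<or> x = -L then 1/2
      else min (1/2) (sqrt (t / pi) * max (1 / (L - x)) (1 / (L + x))))"

end

theory Submission
  imports Defs "HOL-Probability.Distributions"
begin

text \<open>By the method of images, the Green's function splits into alternating series of Gaussians
  whose centres advance by \<open>4L\<close>. Their terms decrease, so each series lies between \<open>0\<close> and its
  first term (Leibniz), and \<open>H\<close> is dominated pointwise by four Gaussians centred outside
  \<open>[-L, L]\<close>, at distance at least \<open>L - x\<close> or \<open>L + x\<close> from \<open>x\<close>. Their integrals over
  \<open>[-L, L]\<close> are Gaussian tails, bounded by \<open>min (1/2) (sqrt (t/pi) / c) * exp (- c^2 / (4 t))\<close>,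
  which gives the first estimate; the second follows since \<open>K * E\<close> increases with \<open>t\<close>.
  For the third, at each time \<open>s\<close> the integral of \<open>H^2\<close> is at most \<open>K\<close> times the derivative of
  \<open>sqrt (s/pi) * E(s)^2\<close>: for large \<open>L^2/s\<close> bound it by \<open>sup |H| * \<integral>|H|\<close>, for small \<open>L^2/s\<close>
  (where \<open>K = 1/2\<close>) by \<open>2L * sup |H|^2\<close>; integrating in \<open>s\<close> gives the claim.\<close>

section \<open>The heat kernel and its tail integrals\<close>

lemma heat_kernel_nonneg: "0 \<le> t \<Longrightarrow> 0 \<le> heat_kernel t z"
  by (simp add: heat_kernel_def)

lemma heat_kernel_minus [simp]: "heat_kernel t (- z) = heat_kernel t z"
  by (simp add: heat_kernel_def)

lemma heat_kernel_eq_mult_exp: "heat_kernel t z = heat_kernel t 0 * exp (- (z^2) / (4 * t))"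
  by (simp add: heat_kernel_def)

lemma heat_kernel_0: "0 < t \<Longrightarrow> heat_kernel t 0 = 1 / (2 * sqrt (pi * t))"
  by (simp add: heat_kernel_def real_sqrt_mult)

lemma heat_kernel_antimono:
  assumes "0 < t" "\<bar>z\<bar> \<le> \<bar>w\<bar>"
  shows "heat_kernel t w \<le> heat_kernel t z"
proof -
  have "z^2 \<le> w^2" using assms(2) by (metis abs_le_square_iff)
  then have "- (w^2) / (4 * t) \<le> - (z^2) / (4 * t)" using assms(1)
    by (simp add: divide_right_mono)
  then show ?thesis using assms(1) unfolding heat_kernel_def
    by (intro divide_right_mono) auto
qed

lemma continuous_on_heat_kernel: "0 < t \<Longrightarrow> continuous_on A (heat_kernel t)"
  unfolding heat_kernel_def by (intro continuous_intros) auto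

lemma continuous_on_heat_kernel_compose:
  "0 < t \<Longrightarrow> continuous_on A g \<Longrightarrow> continuous_on A (\<lambda>y. heat_kernel t (g y))"
  by (rule continuous_on_compose2[OF continuous_on_heat_kernel[where A = UNIV]]) auto

lemma heat_kernel_shift_le:
  assumes t: "0 < t" and "0 \<le> c" "0 \<le> v"
  shows "heat_kernel t (c + v) \<le> exp (- (c^2) / (4 * t)) * heat_kernel t v"
proof -
  have "c^2 + v^2 \<le> (c + v)^2" using assms by (simp add: power2_sum)
  then have "- ((c + v)^2) / (4 * t) \<le> - (c^2) / (4 * t) + - (v^2) / (4 * t)"
    using t by (simp add: field_simps)
  then have "exp (- ((c + v)^2) / (4 * t)) \<le> exp (- (c^2) / (4 * t)) * exp (- (v^2) / (4 * t))"
    by (simp add: exp_add[symmetric])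
  then show ?thesis
    using heat_kernel_nonneg[of t 0] t
    by (subst (1 2) heat_kernel_eq_mult_exp) (simp add: mult.left_commute mult_left_mono)
qed

lemma has_bochner_integral_heat_kernel_half_line:
  assumes t: "0 < t"
  shows "has_bochner_integral lborel (\<lambda>v. indicator {0..} v * heat_kernel t v) (1/2)"
proof -
  define f :: "real \<Rightarrow> real" where "f v = indicator {0..} v *\<^sub>R exp (- v\<^sup>2)" for v
  define c where "c = 1 / (2 * sqrt t)"
  have c: "0 < c" using t by (simp add: c_def)
  have f: "has_bochner_integral lborel f (sqrt pi / 2)"
    unfolding f_def by (rule gaussian_moment_0)
  have f_scaled: "f (0 + c * v) / sqrt (4 * pi * t) = indicator {0..} v * heat_kernel t v" for v
  proof -
    have "(c * v)\<^sup>2 = v\<^sup>2 / (4 * t)" using t by (simp add: c_def power_mult_distrib power_divide)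
    moreover have "indicator {0..} (c * v) = (indicator {0..} v :: real)"
      using c by (simp add: indicator_def zero_le_mult_iff)
    ultimately show ?thesis by (simp add: f_def heat_kernel_def)
  qed
  have "has_bochner_integral lborel (\<lambda>v. f (0 + c * v)) (sqrt pi / 2 /\<^sub>R \<bar>c\<bar>)"
    using lborel_has_bochner_integral_real_affine_iff[of c f "sqrt pi / 2" 0] f c by blast
  then have "has_bochner_integral lborel (\<lambda>v. f (0 + c * v) / sqrt (4 * pi * t))
      (sqrt pi / 2 /\<^sub>R \<bar>c\<bar> / sqrt (4 * pi * t))"
    by (rule has_bochner_integral_divide_zero)
  moreover have "sqrt pi / 2 /\<^sub>R \<bar>c\<bar> / sqrt (4 * pi * t) = 1/2"
    using t c by (simp add: c_def real_sqrt_mult field_simps)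
  ultimately show ?thesis
    unfolding f_scaled by (simp only:)
qed

lemma integral_heat_kernel_le_half:
  assumes t: "0 < t" and "0 \<le> h"
  shows "integral {0..h} (heat_kernel t) \<le> 1/2"
proof -
  note half_line = has_bochner_integral_heat_kernel_half_line[OF t]
  have int: "set_integrable lborel {0..h} (heat_kernel t)"
    by (rule borel_integrable_atLeastAtMost'[OF continuous_on_heat_kernel[OF t]])
  have "integral {0..h} (heat_kernel t) = (\<integral>v. indicator {0..h} v * heat_kernel t v \<partial>lborel)"
    using set_borel_integral_eq_integral(2)[OF int] by (simp add: set_lebesgue_integral_def)
  also have "\<dots> \<le> (\<integral>v. indicator {0..} v * heat_kernel t v \<partial>lborel)"
    using int half_line heat_kernel_nonneg[of t] t
    by (intro integral_mono) (auto simp: set_integrable_def has_bochner_integral_iff indicator_def)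
  also have "\<dots> = 1/2"
    using half_line by (simp add: has_bochner_integral_iff)
  finally show ?thesis .
qed

lemma integral_heat_kernel_tail_le_half:
  assumes t: "0 < t" and c: "0 \<le> c" and h: "0 \<le> h"
  shows "integral {c..c+h} (heat_kernel t) \<le> 1/2 * exp (- (c^2) / (4 * t))"
proof -
  have "integral {c..c+h} (heat_kernel t) = integral {0..h} (heat_kernel t \<circ> (+) c)"
    using integral_shift_Icc_real[of 0 h "heat_kernel t" c] by (simp add: add.commute)
  also have "\<dots> \<le> integral {0..h} (\<lambda>v. exp (- (c^2) / (4 * t)) * heat_kernel t v)"
    using heat_kernel_shift_le[OF t c]
    by (intro integral_le integrable_continuous_interval continuous_intros
        continuous_on_compose continuous_on_heat_kernel[OF t]) auto
  also have "\<dots> = exp (- (c^2) / (4 * t)) * integral {0..h} (heat_kernel t)"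
    by simp
  also have "\<dots> \<le> exp (- (c^2) / (4 * t)) * (1/2)"
    by (intro mult_left_mono integral_heat_kernel_le_half[OF t h]) simp
  finally show ?thesis by simp
qed

text \<open>Mills' ratio: inserting the factor \<open>z / c \<ge> 1\<close> gives the integrand \<open>z * heat_kernel t z / c\<close>,
  which has the explicit primitive \<open>- 2 t heat_kernel t z / c\<close>.\<close>

lemma integral_heat_kernel_tail_le_mills:
  assumes t: "0 < t" and c: "0 < c" and h: "0 \<le> h"
  shows "integral {c..c+h} (heat_kernel t) \<le> sqrt (t / pi) / c * exp (- (c^2) / (4 * t))"
proof -
  define F where "F z = - 2 * t * heat_kernel t z" for z
  have "(F has_real_derivative z * heat_kernel t z) (at z)" for z
    unfolding F_def heat_kernel_def
    by (rule derivative_eq_intros refl | use t in \<open>simp add: field_simps\<close>)+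
  then have ftc: "((\<lambda>z. z * heat_kernel t z) has_integral (F (c+h) - F c)) {c..c+h}"
    using h by (intro fundamental_theorem_of_calculus)
      (auto simp: has_real_derivative_iff_has_vector_derivative has_vector_derivative_at_within)
  have "integral {c..c+h} (heat_kernel t) \<le> integral {c..c+h} (\<lambda>z. (1/c) * (z * heat_kernel t z))"
  proof (intro integral_le integrable_continuous_interval continuous_intros continuous_on_heat_kernel[OF t])
    fix z assume "z \<in> {c..c+h}"
    then have "1 * heat_kernel t z \<le> (z / c) * heat_kernel t z"
      using c heat_kernel_nonneg[of t z] t by (intro mult_right_mono) auto
    then show "heat_kernel t z \<le> (1/c) * (z * heat_kernel t z)" by simp
  qed
  also have "\<dots> = (1/c) * (F (c+h) - F c)"
    using integral_unique[OF ftc] by simp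
  also have "\<dots> \<le> (1/c) * (2 * t * heat_kernel t c)"
    using heat_kernel_nonneg[of t "c+h"] t c by (simp add: F_def divide_right_mono)
  also have "\<dots> = sqrt (t / pi) / c * exp (- (c^2) / (4 * t))"
  proof -
    have "2 * t / sqrt (4 * pi * t) = sqrt (t / pi)"
      using t by (simp add: real_sqrt_mult real_sqrt_divide field_simps)
    moreover have "2 * t * heat_kernel t c = (2 * t / sqrt (4 * pi * t)) * exp (- (c^2) / (4 * t))"
      by (simp add: heat_kernel_def)
    ultimately show ?thesis by simp
  qed
  finally show ?thesis .
qed

lemma K_const_nonneg:
  assumes "0 \<le> t" "-L \<le> x" "x \<le> L"
  shows "0 \<le> K_const t x L"
  using assms by (auto simp: K_const_def le_max_iff_disj)

lemma K_const_mono: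
  assumes "0 < s" "s \<le> t" "-L \<le> x" "x \<le> L"
  shows "K_const s x L \<le> K_const t x L"
proof (cases "x = L \<or> x = -L")
  case False
  then have "0 \<le> max (1 / (L - x)) (1 / (L + x))"
    using assms by (auto simp: le_max_iff_disj)
  moreover have "sqrt (s / pi) \<le> sqrt (t / pi)"
    using assms by (simp add: divide_right_mono)
  ultimately have "min (1/2) (sqrt (s / pi) * max (1 / (L - x)) (1 / (L + x)))
      \<le> min (1/2) (sqrt (t / pi) * max (1 / (L - x)) (1 / (L + x)))"
    by (intro min.mono order_refl mult_right_mono)
  then show ?thesis
    using False by (simp only: K_const_def if_False)
qed (simp add: K_const_def)

lemma K_const_eq_half:
  assumes t: "L^2 \<le> t" and L: "0 < L" and "-L \<le> x" "x \<le> L"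
  shows "K_const t x L = 1/2"
proof (cases "x = L \<or> x = -L")
  case False
  then have "0 < L - x" "0 < L + x" using assms by auto
  then have max_ge: "1 / L \<le> max (1 / (L - x)) (1 / (L + x))"
    by (cases "x \<le> 0") (auto simp: le_max_iff_disj intro!: divide_left_mono)
  have "L^2 / 4 \<le> t / pi"
  proof -
    have "pi * L^2 \<le> 4 * L^2"
      using pi_less_4 by (intro mult_right_mono) auto
    then have "pi * L^2 \<le> 4 * t"
      using t by linarith
    then show ?thesis by (simp add: field_simps)
  qed
  then have "sqrt (L^2 / 4) \<le> sqrt (t / pi)" by (rule real_sqrt_le_mono)
  then have "L / 2 \<le> sqrt (t / pi)" using L by (simp add: real_sqrt_divide)
  moreover have "0 \<le> t" using t zero_le_power2[of L] by linarith
  ultimately have "(L / 2) * (1 / L) \<le> sqrt (t / pi) * max (1 / (L - x)) (1 / (L + x))"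
    using L by (intro mult_mono max_ge) auto
  then show ?thesis using False L by (simp add: K_const_def)
qed (simp add: K_const_def)

lemma integral_heat_kernel_tail_le_K_const:
  assumes t: "0 < t" and "-L \<le> x" "x \<le> L" and c: "c = L - x \<or> c = L + x" and h: "0 \<le> h"
  shows "integral {c..c+h} (heat_kernel t) \<le> K_const t x L * exp (- (c^2) / (4 * t))"
proof (cases "x = L \<or> x = -L")
  case True
  then show ?thesis
    using integral_heat_kernel_tail_le_half[OF t _ h, of c] c assms by (auto simp: K_const_def)
next
  case False
  then have c0: "0 < c" using c assms by auto
  have "sqrt (t / pi) / c \<le> sqrt (t / pi) * max (1 / (L - x)) (1 / (L + x))"
    using c t by (auto simp: divide_inverse intro!: mult_left_mono)
  then have "min (1/2) (sqrt (t / pi) / c) \<le> K_const t x L"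
    using False unfolding K_const_def by (simp only: if_False min.mono[OF order_refl])
  moreover have "integral {c..c+h} (heat_kernel t) \<le> min (1/2) (sqrt (t / pi) / c) * exp (- (c^2) / (4 * t))"
    using integral_heat_kernel_tail_le_half[OF t _ h, of c] integral_heat_kernel_tail_le_mills[OF t c0 h] c0
    by (simp add: min_mult_distrib_right)
  ultimately show ?thesis
    by (meson exp_ge_zero mult_right_mono order_trans)
qed

section \<open>The method of images\<close>

lemma heat_kernel_image_le_geometric:
  assumes t: "0 < t" and L: "0 < L" and c: "-2*L \<le> c"
  shows "heat_kernel t (c + 4 * real i * L) \<le> heat_kernel t 0 * exp (- (L^2) / t) ^ i"
proof -
  have "real i \<le> real i ^ 2" by (cases i) (auto simp: power2_eq_square)
  then have "4 * real i * L^2 \<le> (2 * real i * L)^2"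
    by (simp add: power_mult_distrib mult_right_mono)
  also have "(2 * real i * L)^2 \<le> (c + 4 * real i * L)^2"
  proof (cases "i = 0")
    case False
    then have "L \<le> real i * L" using L by simp
    then show ?thesis using c L by (intro power_mono) linarith+
  qed (use c in simp)
  finally have sq: "4 * real i * L^2 \<le> (c + 4 * real i * L)^2" .
  have "- ((c + 4 * real i * L)^2) / (4 * t) \<le> - (4 * real i * L^2) / (4 * t)"
    using sq t by (intro divide_right_mono) auto
  also have "\<dots> = real i * (- (L^2) / t)"
    using t by (simp add: field_simps)
  finally have "- ((c + 4 * real i * L)^2) / (4 * t) \<le> real i * (- (L^2) / t)" .
  then have "exp (- ((c + 4 * real i * L)^2) / (4 * t)) \<le> exp (- (L^2) / t) ^ i"
    by (metis exp_le_cancel_iff exp_of_nat_mult)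
  then show ?thesis
    using heat_kernel_nonneg[of t 0] t
    by (subst heat_kernel_eq_mult_exp) (simp add: mult_left_mono)
qed

lemma summable_heat_kernel_images:
  assumes t: "0 < t" and L: "0 < L" and c: "-2*L \<le> c"
  shows "summable (\<lambda>i. heat_kernel t (c + 4 * real i * L))"
proof (rule summable_comparison_test')
  show "summable (\<lambda>i. heat_kernel t 0 * exp (- (L^2) / t) ^ i)"
    using t L by (intro summable_mult summable_geometric) simp
  show "norm (heat_kernel t (c + 4 * real i * L)) \<le> heat_kernel t 0 * exp (- (L^2) / t) ^ i" for i
    using heat_kernel_image_le_geometric[OF assms] heat_kernel_nonneg[of t] t by simp
qed

definition alt_image_sum :: "real \<Rightarrow> real \<Rightarrow> real \<Rightarrow> real" where
  "alt_image_sum L t c = (\<Sum>i. (-1)^i * heat_kernel t (c + 4 * real i * L))"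

lemma summable_alt_image_sum:
  assumes "0 < t" "0 < L" "-2*L \<le> c"
  shows "summable (\<lambda>i. norm ((-1::real)^i * heat_kernel t (c + 4 * real i * L)))"
  using summable_heat_kernel_images[OF assms] heat_kernel_nonneg[of t] assms
  by (simp add: abs_mult)

lemma alt_image_sum_bounds:
  assumes t: "0 < t" and L: "0 < L" and c: "0 \<le> c"
  shows "0 \<le> alt_image_sum L t c" "alt_image_sum L t c \<le> heat_kernel t c"
proof -
  let ?a = "\<lambda>i. heat_kernel t (c + 4 * real i * L)"
  have lim: "?a \<longlonglongrightarrow> 0"
    using c L by (intro summable_LIMSEQ_zero summable_heat_kernel_images[OF t L]) simp
  have nonneg: "0 \<le> ?a i" and decr: "?a (Suc i) \<le> ?a i" for i
    using heat_kernel_nonneg[of t] t c L by (auto intro!: heat_kernel_antimono)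
  note Leibniz = summable_Leibniz'[OF lim nonneg decr]
  from Leibniz(2)[of 0] show "0 \<le> alt_image_sum L t c"
    by (simp add: alt_image_sum_def)
  from Leibniz(4)[of 0] show "alt_image_sum L t c \<le> heat_kernel t c"
    by (simp add: alt_image_sum_def)
qed

lemma alt_image_sum_unfold:
  assumes t: "0 < t" and L: "0 < L" and c: "-2*L \<le> c"
  shows "alt_image_sum L t c = heat_kernel t c - alt_image_sum L t (c + 4 * L)"
proof -
  have "summable (\<lambda>i. (-1::real)^i * heat_kernel t (c + 4 * real i * L))"
    by (rule summable_norm_cancel[OF summable_alt_image_sum[OF assms]])
  from suminf_split_head[OF this] have
    "(\<Sum>i. - ((-1::real)^i * heat_kernel t ((c + 4 * L) + 4 * real i * L)))
      = alt_image_sum L t c - heat_kernel t c"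
    by (simp add: alt_image_sum_def algebra_simps)
  moreover have "(\<Sum>i. - ((-1::real)^i * heat_kernel t ((c + 4 * L) + 4 * real i * L)))
      = - alt_image_sum L t (c + 4 * L)"
    unfolding alt_image_sum_def using t L c
    by (intro suminf_minus summable_norm_cancel[OF summable_alt_image_sum]) auto
  ultimately show ?thesis by simp
qed

lemma has_sum_int_split:
  fixes f :: "int \<Rightarrow> 'a :: topological_comm_monoid_add"
  assumes "((\<lambda>i. f (int i)) has_sum a) UNIV" and "((\<lambda>i. f (- int i - 1)) has_sum b) UNIV"
  shows "(f has_sum (a + b)) UNIV"
proof -
  have "(f has_sum a) (range int)"
    using assms(1) by (subst has_sum_reindex) (auto simp: inj_on_def comp_def)
  moreover have "(f has_sum b) (range (\<lambda>i. - int i - 1))"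
    using assms(2) by (subst has_sum_reindex) (auto simp: inj_on_def comp_def)
  ultimately have "(f has_sum (a + b)) (range int \<union> range (\<lambda>i. - int i - 1))"
    by (rule has_sum_Un_disjoint) auto
  moreover have "range int \<union> range (\<lambda>i. - int i - 1) = UNIV"
  proof -
    have "m \<in> range int \<union> range (\<lambda>i. - int i - 1)" for m :: int
    proof (cases "0 \<le> m")
      case True
      then have "m = int (nat m)" by simp
      then show ?thesis by blast
    next
      case False
      then have "m = - int (nat (- m - 1)) - 1" by simp
      then show ?thesis by blast
    qed
    then show ?thesis by blast
  qed
  ultimately show ?thesis by simp
qed

lemma has_sum_alt_image_sum_diff:
  assumes "0 < t" "0 < L" "-2*L \<le> c" "-2*L \<le> d"
  shows "((\<lambda>i. (-1)^i * (heat_kernel t (c + 4 * real i * L) - heat_kernel t (d + 4 * real i * L)))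
           has_sum (alt_image_sum L t c - alt_image_sum L t d)) UNIV"
proof (rule norm_summable_imp_has_sum)
  note sc = summable_alt_image_sum[OF assms(1-3)] and sd = summable_alt_image_sum[OF assms(1,2,4)]
  show "summable (\<lambda>i. norm ((-1::real)^i * (heat_kernel t (c + 4 * real i * L) - heat_kernel t (d + 4 * real i * L))))"
    by (rule summable_comparison_test'[OF summable_add[OF sc sd]])
      (simp add: abs_mult abs_triangle_ineq4)
  show "(\<lambda>i. (-1)^i * (heat_kernel t (c + 4 * real i * L) - heat_kernel t (d + 4 * real i * L)))
      sums (alt_image_sum L t c - alt_image_sum L t d)"
    unfolding alt_image_sum_def right_diff_distrib
    by (rule sums_diff summable_sums summable_norm_cancel[OF sc] summable_norm_cancel[OF sd])+
qed

text \<open>Images with \<open>m \<ge> 0\<close> and \<open>m < 0\<close> form two alternating series each; all four shifts are \<open>\<ge> -2L\<close>.\<close>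

lemma green_mixed_eq_alt_image_sums:
  assumes t: "0 < t" and L: "0 < L" and "\<bar>x - y\<bar> \<le> 2*L" and "\<bar>x + y\<bar> \<le> 2*L"
  shows "green_mixed L t x y = alt_image_sum L t (x - y) - alt_image_sum L t (2*L + (x + y))
           + (alt_image_sum L t (2*L - (x + y)) - alt_image_sum L t (4*L - (x - y)))"
proof -
  define f where "f m = (-1::real) powi m * (heat_kernel t (x - y + 4 * of_int m * L)
    - heat_kernel t (x + y + (4 * of_int m + 2) * L))" for m :: int
  have "(\<lambda>i. f (int i)) = (\<lambda>i. (-1)^i * (heat_kernel t ((x - y) + 4 * real i * L)
      - heat_kernel t ((2*L + (x + y)) + 4 * real i * L)))"
    by (simp add: f_def power_int_of_nat algebra_simps)
  then have pos: "((\<lambda>i. f (int i)) has_sum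
      (alt_image_sum L t (x - y) - alt_image_sum L t (2*L + (x + y)))) UNIV"
    using assms by (simp only:) (intro has_sum_alt_image_sum_diff[OF t L]; linarith)
  have "f (- int i - 1) = (-1)^i * (heat_kernel t ((2*L - (x + y)) + 4 * real i * L)
      - heat_kernel t ((4*L - (x - y)) + 4 * real i * L))" for i
  proof -
    have "- int i - 1 = - int (Suc i)" by simp
    then have "(-1::real) powi (- int i - 1) = inverse ((-1) powi int (Suc i))"
      by (simp only: power_int_minus)
    also have "\<dots> = - ((-1)^i)"
      by (simp only: power_int_of_nat) (simp add: power_inverse[symmetric])
    finally have sign: "(-1::real) powi (- int i - 1) = - ((-1)^i)" .
    have shift1: "x - y + 4 * of_int (- int i - 1) * L = - ((4*L - (x - y)) + 4 * real i * L)"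
      and shift2: "x + y + (4 * of_int (- int i - 1) + 2) * L = - ((2*L - (x + y)) + 4 * real i * L)"
      by (simp_all add: algebra_simps)
    show ?thesis
      unfolding f_def sign shift1 shift2 heat_kernel_minus by (simp add: algebra_simps)
  qed
  then have "(\<lambda>i. f (- int i - 1)) = (\<lambda>i. (-1)^i * (heat_kernel t ((2*L - (x + y)) + 4 * real i * L)
      - heat_kernel t ((4*L - (x - y)) + 4 * real i * L)))"
    by (rule ext)
  then have neg: "((\<lambda>i. f (- int i - 1)) has_sum
      (alt_image_sum L t (2*L - (x + y)) - alt_image_sum L t (4*L - (x - y)))) UNIV"
    using assms by (simp only:) (intro has_sum_alt_image_sum_diff[OF t L]; linarith)
  have "green_mixed L t x y = infsum f UNIV"
    unfolding green_mixed_def f_def ..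
  also have "\<dots> = alt_image_sum L t (x - y) - alt_image_sum L t (2*L + (x + y))
           + (alt_image_sum L t (2*L - (x + y)) - alt_image_sum L t (4*L - (x - y)))"
    by (rule infsumI, rule has_sum_int_split[OF pos neg])
  finally show ?thesis .
qed

lemma H_mixed_eq_alt_image_sums:
  assumes t: "0 < t" and L: "0 < L" and "\<bar>x\<bar> \<le> L" and "\<bar>y\<bar> \<le> L"
  shows "H_mixed L t x y = alt_image_sum L t (4*L + (x - y)) + alt_image_sum L t (2*L + (x + y))
           + alt_image_sum L t (4*L - (x - y)) - alt_image_sum L t (2*L - (x + y))"
proof -
  have "alt_image_sum L t (x - y) = heat_kernel t (x - y) - alt_image_sum L t (4*L + (x - y))"
    using alt_image_sum_unfold[OF t L, of "x - y"] assms by (simp add: add.commute)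
  then show ?thesis
    using green_mixed_eq_alt_image_sums[OF t L, of x y] assms by (simp add: H_mixed_def)
qed

lemma H_mixed_bounds:
  assumes t: "0 < t" and L: "0 < L" and "\<bar>x\<bar> \<le> L" and "\<bar>y\<bar> \<le> L"
  shows "- heat_kernel t (2*L - (x + y)) \<le> H_mixed L t x y"
    and "H_mixed L t x y \<le> heat_kernel t (2*L + (x + y)) + heat_kernel t (4*L + (x - y))
                            + heat_kernel t (6*L - (x + y))"
proof -
  note H = H_mixed_eq_alt_image_sums[OF assms]
  have A: "0 \<le> alt_image_sum L t c" "alt_image_sum L t c \<le> heat_kernel t c" if "0 \<le> c" for c
    using alt_image_sum_bounds[OF t L that] by auto
  have "0 \<le> 4*L + (x - y)" "0 \<le> 2*L + (x + y)" "0 \<le> 4*L - (x - y)" "0 \<le> 2*L - (x + y)"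
    using assms by auto
  note A' = this[THEN A(1)] this[THEN A(2)]
  then show "- heat_kernel t (2*L - (x + y)) \<le> H_mixed L t x y"
    unfolding H by linarith
  have "alt_image_sum L t (2*L - (x + y)) = heat_kernel t (2*L - (x + y)) - alt_image_sum L t (6*L - (x + y))"
    using alt_image_sum_unfold[OF t L, of "2*L - (x + y)"] assms by (simp add: algebra_simps)
  moreover have "0 \<le> 6*L - (x + y)" using assms by auto
  moreover have "heat_kernel t (4*L - (x - y)) \<le> heat_kernel t (2*L - (x + y))"
    using assms by (intro heat_kernel_antimono[OF t]) auto
  ultimately show "H_mixed L t x y \<le> heat_kernel t (2*L + (x + y)) + heat_kernel t (4*L + (x - y))
                            + heat_kernel t (6*L - (x + y))"
    using A' A(2)[of "6*L - (x + y)"] unfolding H by linarith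
qed

definition H_mixed_majorant :: "real \<Rightarrow> real \<Rightarrow> real \<Rightarrow> real \<Rightarrow> real" where
  "H_mixed_majorant L t x y = heat_kernel t (2*L - (x + y)) + heat_kernel t (2*L + (x + y))
      + heat_kernel t (4*L + (x - y)) + heat_kernel t (6*L - (x + y))"

lemma abs_H_mixed_le_majorant:
  assumes "0 < t" "0 < L" "\<bar>x\<bar> \<le> L" "\<bar>y\<bar> \<le> L"
  shows "\<bar>H_mixed L t x y\<bar> \<le> H_mixed_majorant L t x y"
  using H_mixed_bounds[OF assms] heat_kernel_nonneg[of t] assms
  unfolding H_mixed_majorant_def abs_le_iff by (smt (verit))

text \<open>At \<open>t = 0\<close> the heat kernel is \<open>0\<close> (a division by \<open>sqrt 0\<close>), so the endpoint \<open>s = 0\<close>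
  of the time integrals contributes nothing.\<close>

lemma H_mixed_at_0: "H_mixed L 0 x y = 0"
  by (simp add: H_mixed_def green_mixed_def heat_kernel_def)

section \<open>The \<open>L^1\<close> estimates\<close>

definition boundary_decay :: "real \<Rightarrow> real \<Rightarrow> real \<Rightarrow> real" where
  "boundary_decay L x t = exp (- ((L - x)^2) / (4 * t)) + exp (- ((L + x)^2) / (4 * t))"

lemma boundary_decay_nonneg: "0 \<le> boundary_decay L x t"
  by (simp add: boundary_decay_def add_nonneg_nonneg)

text \<open>\<open>H_mixed\<close> is not known to be measurable; since a non-integrable function has integral \<open>0\<close>,
  upper bounds need only be proved in the integrable case.\<close>

lemma set_integral_le_by_cases:
  fixes f :: "'a \<Rightarrow> real"
  assumes "set_integrable M A f \<Longrightarrow> (LINT x:A|M. f x) \<le> c" and "0 \<le> c"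
  shows "(LINT x:A|M. f x) \<le> c"
  using assms not_integrable_integral_eq[of M "\<lambda>x. indicator A x *\<^sub>R f x"]
  unfolding set_lebesgue_integral_def set_integrable_def by fastforce

lemma integral_heat_kernel_plus_shift:
  "integral {-L..L} (\<lambda>y. heat_kernel t (p + y)) = integral {p-L..p+L} (heat_kernel t)"
  using integral_shift_Icc_real[of "-L" L "heat_kernel t" p] by (simp add: comp_def add.commute)

lemma integral_heat_kernel_minus_shift:
  "integral {-L..L} (\<lambda>y. heat_kernel t (p - y)) = integral {p-L..p+L} (heat_kernel t)"
proof -
  have "integral {-L..L} (\<lambda>y. heat_kernel t (p - y)) = integral {-L..L} (\<lambda>y. (\<lambda>z. heat_kernel t (p + z)) (- y))"
    by simp
  also have "\<dots> = integral {-L..L} (\<lambda>z. heat_kernel t (p + z))"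
    using Henstock_Kurzweil_Integration.integral_reflect_real[where a = "-L" and b = L and f = "\<lambda>z. heat_kernel t (p + z)"]
    by (simp only: minus_minus)
  finally show ?thesis
    by (simp only: integral_heat_kernel_plus_shift)
qed

lemma integral_H_mixed_majorant_le:
  assumes t: "0 < t" and L: "0 < L" and x: "\<bar>x\<bar> \<le> L"
  shows "integral {-L..L} (H_mixed_majorant L t x) \<le> K_const t x L * boundary_decay L x t"
proof -
  let ?I = "\<lambda>a b. integral {a..b} (heat_kernel t)"
  have int: "heat_kernel t integrable_on {a..b}" for a b
    by (intro integrable_continuous_interval continuous_on_heat_kernel[OF t])
  have int_plus: "(\<lambda>y. heat_kernel t (p + y)) integrable_on {-L..L}"
    and int_minus: "(\<lambda>y. heat_kernel t (p - y)) integrable_on {-L..L}" for p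
    by (intro integrable_continuous_interval continuous_on_heat_kernel_compose[OF t] continuous_intros)+
  have "H_mixed_majorant L t x = (\<lambda>y. heat_kernel t ((2*L - x) - y) + heat_kernel t ((2*L + x) + y)
      + heat_kernel t ((4*L + x) - y) + heat_kernel t ((6*L - x) - y))"
    by (auto simp: H_mixed_majorant_def algebra_simps)
  then have "integral {-L..L} (H_mixed_majorant L t x)
      = ?I ((2*L - x) - L) ((2*L - x) + L) + ?I ((2*L + x) - L) ((2*L + x) + L)
        + ?I ((4*L + x) - L) ((4*L + x) + L) + ?I ((6*L - x) - L) ((6*L - x) + L)"
    by (simp only: integral_add int_plus int_minus integrable_add integral_heat_kernel_plus_shift
        integral_heat_kernel_minus_shift)
  also have "\<dots> = ?I (L - x) (3*L - x) + ?I (L + x) (3*L + x) + ?I (3*L + x) (5*L + x) + ?I (5*L - x) (7*L - x)"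
    by (simp add: algebra_simps)
  also have "\<dots> \<le> ?I (L - x) ((L - x) + 6*L) + ?I (L + x) ((L + x) + 4*L)"
  proof -
    have "?I (L - x) (3*L - x) + ?I (3*L - x) (5*L - x) = ?I (L - x) (5*L - x)"
      and "?I (L - x) (5*L - x) + ?I (5*L - x) (7*L - x) = ?I (L - x) ((L - x) + 6*L)"
      and "?I (L + x) (3*L + x) + ?I (3*L + x) (5*L + x) = ?I (L + x) ((L + x) + 4*L)"
      using L int by (auto intro!: Henstock_Kurzweil_Integration.integral_combine)
    moreover have "0 \<le> ?I (3*L - x) (5*L - x)"
      using heat_kernel_nonneg[of t] t int by (intro integral_nonneg) auto
    ultimately show ?thesis by linarith
  qed
  also have "\<dots> \<le> K_const t x L * exp (- ((L - x)^2) / (4 * t)) + K_const t x L * exp (- ((L + x)^2) / (4 * t))"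
    using x L by (intro add_mono integral_heat_kernel_tail_le_K_const[OF t]) auto
  finally show ?thesis
    by (simp add: boundary_decay_def distrib_left)
qed

lemma integral_abs_H_mixed_le:
  assumes t: "0 < t" and L: "0 < L" and x: "\<bar>x\<bar> \<le> L"
  shows "(LINT y:{-L..L}|lborel. \<bar>H_mixed L t x y\<bar>) \<le> K_const t x L * boundary_decay L x t"
proof (rule set_integral_le_by_cases)
  assume int: "set_integrable lborel {-L..L} (\<lambda>y. \<bar>H_mixed L t x y\<bar>)"
  have int_majorant: "set_integrable lborel {-L..L} (H_mixed_majorant L t x)"
    unfolding H_mixed_majorant_def
    by (intro borel_integrable_atLeastAtMost' continuous_intros continuous_on_heat_kernel_compose[OF t])
  have "(LINT y:{-L..L}|lborel. \<bar>H_mixed L t x y\<bar>) \<le> (LINT y:{-L..L}|lborel. H_mixed_majorant L t x y)"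
    using abs_H_mixed_le_majorant[OF t L x] by (intro set_integral_mono[OF int int_majorant]) auto
  also have "\<dots> = integral {-L..L} (H_mixed_majorant L t x)"
    by (rule set_borel_integral_eq_integral(2)[OF int_majorant])
  finally show "(LINT y:{-L..L}|lborel. \<bar>H_mixed L t x y\<bar>) \<le> K_const t x L * boundary_decay L x t"
    using integral_H_mixed_majorant_le[OF assms] by linarith
qed (use t x in \<open>simp add: K_const_nonneg boundary_decay_nonneg\<close>)

lemma exp_neg_sq_div_mono:
  fixes s t c :: real
  assumes "0 < s" "s \<le> t"
  shows "exp (- (c^2) / (4 * s)) \<le> exp (- (c^2) / (4 * t))"
proof -
  have "c^2 / (4 * t) \<le> c^2 / (4 * s)"
    using assms by (intro divide_left_mono) auto
  then show ?thesis by simp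
qed

lemma exp_neg_div_antimono:
  fixes a b t :: real
  assumes "0 < t" "a \<le> b"
  shows "exp (- b / (4 * t)) \<le> exp (- a / (4 * t))"
  using assms by (simp add: divide_right_mono)

lemma boundary_decay_mono: "0 < s \<Longrightarrow> s \<le> t \<Longrightarrow> boundary_decay L x s \<le> boundary_decay L x t"
  unfolding boundary_decay_def by (intro add_mono exp_neg_sq_div_mono)

lemma time_integral_abs_H_mixed_le:
  assumes t: "0 < t" and L: "0 < L" and x: "\<bar>x\<bar> \<le> L"
  shows "(LINT s:{0..t}|lborel. (LINT y:{-L..L}|lborel. \<bar>H_mixed L s x y\<bar>))
           \<le> t * (K_const t x L * boundary_decay L x t)"
proof (rule set_integral_le_by_cases)
  let ?c = "K_const t x L * boundary_decay L x t"
  have c: "0 \<le> ?c" using t x by (simp add: K_const_nonneg boundary_decay_nonneg)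
  assume int: "set_integrable lborel {0..t} (\<lambda>s. LINT y:{-L..L}|lborel. \<bar>H_mixed L s x y\<bar>)"
  have "(LINT y:{-L..L}|lborel. \<bar>H_mixed L s x y\<bar>) \<le> ?c" if s: "s \<in> {0..t}" for s
  proof (cases "s = 0")
    case False
    then have "0 < s" using s by auto
    then have "(LINT y:{-L..L}|lborel. \<bar>H_mixed L s x y\<bar>) \<le> K_const s x L * boundary_decay L x s"
      using integral_abs_H_mixed_le[OF _ L x] by blast
    also have "\<dots> \<le> ?c"
      using \<open>0 < s\<close> s x by (intro mult_mono K_const_mono boundary_decay_mono K_const_nonneg
          boundary_decay_nonneg) auto
    finally show ?thesis .
  qed (use c in \<open>simp add: H_mixed_at_0\<close>)
  then have "(LINT s:{0..t}|lborel. (LINT y:{-L..L}|lborel. \<bar>H_mixed L s x y\<bar>)) \<le> (LINT s:{0..t}|lborel. ?c)"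
    by (intro set_integral_mono[OF int] borel_integrable_atLeastAtMost' continuous_on_const)
  also have "\<dots> = t * ?c"
    using t by (simp add: set_integral_const)
  finally show "(LINT s:{0..t}|lborel. (LINT y:{-L..L}|lborel. \<bar>H_mixed L s x y\<bar>)) \<le> t * ?c" .
qed (use t x in \<open>simp add: K_const_nonneg boundary_decay_nonneg\<close>)

section \<open>The \<open>L^2\<close> estimate\<close>

definition boundary_decay_deriv :: "real \<Rightarrow> real \<Rightarrow> real \<Rightarrow> real" where
  "boundary_decay_deriv L x t = (L - x)^2 / (4 * t^2) * exp (- ((L - x)^2) / (4 * t))
     + (L + x)^2 / (4 * t^2) * exp (- ((L + x)^2) / (4 * t))"

lemma boundary_decay_deriv_nonneg: "0 \<le> boundary_decay_deriv L x t"
  unfolding boundary_decay_deriv_def by (intro add_nonneg_nonneg mult_nonneg_nonneg) auto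

lemma has_real_derivative_boundary_decay:
  assumes t: "0 < t"
  shows "(boundary_decay L x has_real_derivative boundary_decay_deriv L x t) (at t)"
proof -
  have "((\<lambda>s. exp (- c / (4 * s))) has_real_derivative c / (4 * t^2) * exp (- c / (4 * t))) (at t)" for c
    using t by (auto intro!: derivative_eq_intros simp: power2_eq_square field_simps)
  then show ?thesis
    unfolding boundary_decay_def[abs_def] boundary_decay_deriv_def by (intro DERIV_add)
qed

definition L2_bound :: "real \<Rightarrow> real \<Rightarrow> real \<Rightarrow> real" where
  "L2_bound L x t = sqrt (t / pi) * (boundary_decay L x t)^2"

text \<open>The derivative of \<open>L2_bound\<close>, simplified with \<open>d/dt sqrt (t/pi) = heat_kernel t 0\<close> and
  \<open>2 * sqrt (t/pi) = 4 * t * heat_kernel t 0\<close>.\<close>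

definition L2_bound_deriv :: "real \<Rightarrow> real \<Rightarrow> real \<Rightarrow> real" where
  "L2_bound_deriv L x t = heat_kernel t 0 * boundary_decay L x t
     * (boundary_decay L x t + 4 * t * boundary_decay_deriv L x t)"

lemma L2_bound_deriv_nonneg: "0 \<le> t \<Longrightarrow> 0 \<le> L2_bound_deriv L x t"
  unfolding L2_bound_deriv_def
  by (intro mult_nonneg_nonneg add_nonneg_nonneg heat_kernel_nonneg boundary_decay_nonneg
      boundary_decay_deriv_nonneg) auto

lemma has_real_derivative_L2_bound:
  assumes t: "0 < t"
  shows "(L2_bound L x has_real_derivative L2_bound_deriv L x t) (at t)"
proof -
  have sqrt_deriv: "((\<lambda>s. sqrt (s / pi)) has_real_derivative heat_kernel t 0) (at t)"
  proof -
    have "sqrt (t / pi) * pi = sqrt (pi * t)"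
      using t by (simp add: real_sqrt_divide real_sqrt_mult field_simps)
    then show ?thesis
      using t by (auto intro!: derivative_eq_intros simp: heat_kernel_0 field_simps)
  qed
  have "2 * sqrt (t / pi) = 4 * t * heat_kernel t 0"
  proof -
    have "sqrt (t / pi) * sqrt (pi * t) = t"
      using t by (simp add: real_sqrt_mult[symmetric] real_sqrt_divide[symmetric])
    then show ?thesis
      using t by (simp add: heat_kernel_0 field_simps)
  qed
  moreover have "(L2_bound L x has_real_derivative heat_kernel t 0 * (boundary_decay L x t)^2
      + sqrt (t / pi) * (2 * boundary_decay L x t * boundary_decay_deriv L x t)) (at t)"
    unfolding L2_bound_def[abs_def]
    by (rule derivative_eq_intros sqrt_deriv has_real_derivative_boundary_decay[OF t] refl | simp)+
  ultimately show ?thesis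
    by (simp add: L2_bound_deriv_def power2_eq_square algebra_simps)
qed

lemma isCont_L2_bound_deriv: "0 < t \<Longrightarrow> isCont (L2_bound_deriv L x) t"
  unfolding L2_bound_deriv_def boundary_decay_def[abs_def] boundary_decay_deriv_def heat_kernel_def
  by (intro continuous_intros) auto

lemma L2_bound_tendsto_0: "(L2_bound L x \<longlongrightarrow> 0) (at_right 0)"
proof (rule Lim_null_comparison)
  show "\<forall>\<^sub>F s in at_right 0. norm (L2_bound L x s) \<le> 4 * sqrt (s / pi)"
  proof (rule eventually_mono[OF eventually_at_right_less])
    fix s :: real assume s: "0 < s"
    have "exp (- ((L - x)^2) / (4 * s)) \<le> 1" "exp (- ((L + x)^2) / (4 * s)) \<le> 1"
      using s by (simp_all add: divide_nonneg_pos)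
    then have "boundary_decay L x s \<le> 2"
      unfolding boundary_decay_def by linarith
    then have "(boundary_decay L x s)^2 \<le> 2^2"
      by (rule power_mono[OF _ boundary_decay_nonneg])
    then show "norm (L2_bound L x s) \<le> 4 * sqrt (s / pi)"
      using s by (simp add: L2_bound_def mult_left_mono)
  qed
  show "((\<lambda>s. 4 * sqrt (s / pi)) \<longlongrightarrow> 0) (at_right 0)"
    by (rule tendsto_eq_intros refl | simp)+
qed

lemma set_integral_L2_bound_deriv:
  assumes t: "0 < t"
  shows "set_integrable lborel {0<..<t} (L2_bound_deriv L x)"
    and "(LINT s:{0<..<t}|lborel. L2_bound_deriv L x s) = L2_bound L x t"
proof -
  have lim_0: "((L2_bound L x \<circ> real_of_ereal) \<longlongrightarrow> 0) (at_right (ereal 0))"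
    unfolding ereal_tendsto_simps by (rule L2_bound_tendsto_0)
  have lim_t: "((L2_bound L x \<circ> real_of_ereal) \<longlongrightarrow> L2_bound L x t) (at_left (ereal t))"
    unfolding ereal_tendsto_simps
    using DERIV_isCont[OF has_real_derivative_L2_bound[OF t]]
    by (intro tendsto_mono[OF at_le[of "{..<t}" UNIV]]) (auto simp: isCont_def)
  note FTC = interval_integral_FTC_nonneg[OF _ has_real_derivative_L2_bound isCont_L2_bound_deriv
      AE_I2 lim_0 lim_t]
  show "set_integrable lborel {0<..<t} (L2_bound_deriv L x)"
    using FTC t by (simp add: L2_bound_deriv_nonneg)
  show "(LINT s:{0<..<t}|lborel. L2_bound_deriv L x s) = L2_bound L x t"
    using FTC t by (simp add: L2_bound_deriv_nonneg interval_lebesgue_integral_def)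
qed

text \<open>\<open>sup |H_mixed|\<close> over \<open>y\<close> in units of \<open>heat_kernel t 0\<close>, maximising each Gaussian of
  \<open>H_mixed_bounds\<close> separately over \<open>y \<in> [-L, L]\<close>.\<close>

definition H_mixed_sup_weight :: "real \<Rightarrow> real \<Rightarrow> real \<Rightarrow> real" where
  "H_mixed_sup_weight L x t = max (exp (- ((L - x)^2) / (4 * t)))
     (exp (- ((L + x)^2) / (4 * t)) + exp (- ((3*L + x)^2) / (4 * t)) + exp (- ((5*L - x)^2) / (4 * t)))"

lemma H_mixed_sup_weight_nonneg: "0 \<le> H_mixed_sup_weight L x t"
  by (simp add: H_mixed_sup_weight_def le_max_iff_disj)

lemma abs_H_mixed_le_sup_weight:
  assumes t: "0 < t" and "0 < L" "\<bar>x\<bar> \<le> L" "\<bar>y\<bar> \<le> L"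
  shows "\<bar>H_mixed L t x y\<bar> \<le> heat_kernel t 0 * H_mixed_sup_weight L x t"
proof -
  have "heat_kernel t (2*L - (x + y)) \<le> heat_kernel t (L - x)"
    and "heat_kernel t (2*L + (x + y)) \<le> heat_kernel t (L + x)"
    and "heat_kernel t (4*L + (x - y)) \<le> heat_kernel t (3*L + x)"
    and "heat_kernel t (6*L - (x + y)) \<le> heat_kernel t (5*L - x)"
    using assms by (auto intro!: heat_kernel_antimono[OF t])
  then have "\<bar>H_mixed L t x y\<bar> \<le>
      max (heat_kernel t (L - x)) (heat_kernel t (L + x) + heat_kernel t (3*L + x) + heat_kernel t (5*L - x))"
    using H_mixed_bounds[OF assms] by (auto simp: abs_le_iff le_max_iff_disj)
  also have "\<dots> = heat_kernel t 0 * H_mixed_sup_weight L x t"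
    using heat_kernel_nonneg[of t 0] t
    by (subst (1 2 3 4) heat_kernel_eq_mult_exp)
      (simp add: H_mixed_sup_weight_def max_mult_distrib_left distrib_left)
  finally show ?thesis .
qed

lemma exp_neg_mult_4_le:
  fixes u :: real
  assumes u: "2/5 \<le> u"
  shows "exp (- 4 * u) \<le> u * exp (- u)"
proof -
  have "(1 + 3 * u / real 3) ^ 3 \<le> exp (3 * u)"
    using u by (intro exp_ge_one_plus_x_over_n_power_n) auto
  then have "u * (1 + u) ^ 3 \<le> u * exp (3 * u)"
    using u by (intro mult_left_mono) auto
  moreover have "(2/5) * (7/5::real) ^ 3 \<le> u * (1 + u) ^ 3"
    using u by (intro mult_mono power_mono) auto
  moreover have "(1::real) \<le> (2/5) * (7/5) ^ 3"
    by (simp add: power_divide)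
  ultimately have "1 \<le> u * exp (3 * u)"
    by linarith
  then have "exp (- 4 * u) \<le> exp (- 4 * u) * (u * exp (3 * u))"
    by simp
  also have "\<dots> = u * exp (- u)"
    by (simp add: mult.left_commute flip: exp_add)
  finally show ?thesis .
qed

text \<open>On \<open>[l, h]\<close> we have \<open>exp (-4u) \<le> (1 + l/2)^-8\<close> and \<open>1 + exp (-u) \<ge> 2 - h\<close>, so a
  numerical check at the endpoints bounds the expression on the whole interval.\<close>

lemma small_ratio_estimate_on_interval:
  fixes u l h :: real
  assumes lu: "l \<le> u" and uh: "u \<le> h" and l0: "0 \<le> l" and h1: "h \<le> 1"
    and certificate: "4 * h * (1 + 1 / ((1 + l / 2) ^ 8 * (2 - h))) ^ 4 \<le> 3"
  shows "4 * u * (1 + exp (- 4 * u) / (1 + exp (- u))) ^ 4 \<le> 3"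
proof -
  have "(1 + 4 * l / real 8) ^ 8 \<le> exp (4 * l)"
    using l0 by (intro exp_ge_one_plus_x_over_n_power_n) auto
  then have "(1 + l / 2) ^ 8 \<le> exp (4 * l)" by simp
  have "exp (- 4 * u) \<le> 1 / (1 + l / 2) ^ 8"
  proof -
    have "exp (- 4 * u) \<le> exp (- 4 * l)" using lu by simp
    also have "\<dots> = 1 / exp (4 * l)" by (simp add: exp_minus field_simps)
    also have "\<dots> \<le> 1 / (1 + l / 2) ^ 8"
      using \<open>(1 + l / 2) ^ 8 \<le> exp (4 * l)\<close> l0 by (intro divide_left_mono) auto
    finally show ?thesis .
  qed
  moreover have "2 - h \<le> 1 + exp (- u)"
    using exp_ge_add_one_self[of "- u"] uh by linarith
  ultimately have "exp (- 4 * u) / (1 + exp (- u)) \<le> (1 / (1 + l / 2) ^ 8) / (2 - h)"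
    using h1 by (intro frac_le) auto
  then have "(1 + exp (- 4 * u) / (1 + exp (- u))) ^ 4 \<le> (1 + 1 / ((1 + l / 2) ^ 8 * (2 - h))) ^ 4"
    by (intro power_mono) (auto intro!: add_nonneg_nonneg divide_nonneg_nonneg)
  then have "4 * u * (1 + exp (- 4 * u) / (1 + exp (- u))) ^ 4
      \<le> 4 * h * (1 + 1 / ((1 + l / 2) ^ 8 * (2 - h))) ^ 4"
    using lu l0 uh by (intro mult_mono) auto
  then show ?thesis using certificate by linarith
qed

lemma small_ratio_estimate:
  fixes u :: real
  assumes "0 \<le> u" "u \<le> 2/5"
  shows "4 * u * (1 + exp (- 4 * u) / (1 + exp (- u))) ^ 4 \<le> 3"
proof -
  consider "u \<le> 1/10" | "1/10 \<le> u" "u \<le> 2/10" | "2/10 \<le> u" "u \<le> 1/4" | "1/4 \<le> u" "u \<le> 3/10"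
    | "3/10 \<le> u" "u \<le> 7/20" | "7/20 \<le> u" "u \<le> 3/8" | "3/8 \<le> u" "u \<le> 2/5"
    using assms by linarith
  then show ?thesis
  proof cases
    case 1 show ?thesis by (rule small_ratio_estimate_on_interval[where l = 0 and h = "1/10"])
        (use 1 assms in \<open>auto simp: power_divide\<close>)
  next
    case 2 show ?thesis by (rule small_ratio_estimate_on_interval[where l = "1/10" and h = "2/10"])
        (use 2 in \<open>auto simp: power_divide\<close>)
  next
    case 3 show ?thesis by (rule small_ratio_estimate_on_interval[where l = "2/10" and h = "1/4"])
        (use 3 in \<open>auto simp: power_divide\<close>)
  next
    case 4 show ?thesis by (rule small_ratio_estimate_on_interval[where l = "1/4" and h = "3/10"])
        (use 4 in \<open>auto simp: power_divide\<close>)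
  next
    case 5 show ?thesis by (rule small_ratio_estimate_on_interval[where l = "3/10" and h = "7/20"])
        (use 5 in \<open>auto simp: power_divide\<close>)
  next
    case 6 show ?thesis by (rule small_ratio_estimate_on_interval[where l = "7/20" and h = "3/8"])
        (use 6 in \<open>auto simp: power_divide\<close>)
  next
    case 7 show ?thesis by (rule small_ratio_estimate_on_interval[where l = "3/8" and h = "2/5"])
        (use 7 in \<open>auto simp: power_divide\<close>)
  qed
qed

lemma four_t_boundary_decay_deriv:
  "0 < t \<Longrightarrow> 4 * t * boundary_decay_deriv L x t
    = (L - x)^2 / t * exp (- ((L - x)^2) / (4 * t)) + (L + x)^2 / t * exp (- ((L + x)^2) / (4 * t))"
  by (simp add: boundary_decay_deriv_def power2_eq_square field_simps)

lemma ratio_mult_exp_le_boundary_decay_deriv: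
  assumes t: "0 < t" and x: "\<bar>x\<bar> \<le> L"
  shows "L^2 / t * exp (- (L^2 / t)) \<le> 4 * t * boundary_decay_deriv L x t"
proof -
  have le: "L^2 / t * exp (- (L^2 / t)) \<le> d^2 / t * exp (- (d^2) / (4 * t))"
    if "L \<le> d" "d \<le> 2 * L" for d
  proof (intro mult_mono)
    show "L^2 / t \<le> d^2 / t"
      using that t x by (intro divide_right_mono power_mono) auto
    have "d^2 \<le> (2 * L)^2"
      using that x by (intro power_mono) auto
    then show "exp (- (L^2 / t)) \<le> exp (- (d^2) / (4 * t))"
      using exp_neg_div_antimono[OF t, of "d^2" "(2 * L)^2"] by (simp add: power_mult_distrib)
  qed (use t in auto)
  show ?thesis
  proof (cases "x \<le> 0")
    case True
    then show ?thesis
      using le[of "L - x"] x t by (simp add: four_t_boundary_decay_deriv add_increasing2)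
  next
    case False
    then show ?thesis
      using le[of "L + x"] x t by (simp add: four_t_boundary_decay_deriv add_increasing)
  qed
qed

lemma H_mixed_sup_weight_le_large_ratio:
  assumes t: "0 < t" and L: "0 < L" and x: "\<bar>x\<bar> \<le> L" and u: "2/5 \<le> L^2 / t"
  shows "H_mixed_sup_weight L x t \<le> boundary_decay L x t + 4 * t * boundary_decay_deriv L x t"
proof -
  have "exp (- ((3*L + x)^2) / (4 * t)) \<le> exp (- ((L - x)^2) / (4 * t))"
    using x by (intro exp_neg_div_antimono[OF t] power_mono) auto
  moreover have "exp (- ((5*L - x)^2) / (4 * t)) \<le> exp (- 4 * (L^2 / t))"
  proof -
    have "(4 * L)^2 \<le> (5*L - x)^2"
      using x L by (intro power_mono) auto
    then show ?thesis
      using exp_neg_div_antimono[OF t, of "(4 * L)^2" "(5*L - x)^2"] by (simp add: power_mult_distrib)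
  qed
  moreover have "exp (- 4 * (L^2 / t)) \<le> 4 * t * boundary_decay_deriv L x t"
    using exp_neg_mult_4_le[OF u] ratio_mult_exp_le_boundary_decay_deriv[OF t x] by simp
  moreover have "0 \<le> exp (- ((L + x)^2) / (4 * t))" "0 \<le> 4 * t * boundary_decay_deriv L x t"
    using t by (simp_all add: boundary_decay_deriv_nonneg)
  ultimately show ?thesis
    unfolding H_mixed_sup_weight_def boundary_decay_def by (intro max.boundedI) linarith+
qed

lemma H_mixed_sup_weight_le_boundary_decay_mult:
  assumes t: "0 < t" and x: "\<bar>x\<bar> \<le> L"
  shows "H_mixed_sup_weight L x t
    \<le> boundary_decay L x t * (1 + exp (- 4 * (L^2 / t)) / (1 + exp (- (L^2 / t))))"
proof -
  define \<alpha> \<beta> \<gamma> \<epsilon> where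
    "\<alpha> = exp (- ((L - x)^2) / (4 * t))" and "\<beta> = exp (- ((L + x)^2) / (4 * t))"
    and "\<gamma> = exp (- ((3*L + x)^2) / (4 * t))" and "\<epsilon> = exp (- ((5*L - x)^2) / (4 * t))"
  define w p where "w = exp (- 4 * (L^2 / t))" and "p = exp (- (L^2 / t))"
  have pos: "0 < \<alpha>" "0 < \<beta>" "0 < w" "0 < p"
    by (simp_all add: \<alpha>_def \<beta>_def w_def p_def)
  have "\<gamma> \<le> \<alpha>"
    unfolding \<alpha>_def \<gamma>_def using x by (intro exp_neg_div_antimono[OF t] power_mono) auto
  have Lx: "L * x \<le> L * L"
    using x by (intro mult_left_mono) auto
  have "\<epsilon> \<le> \<alpha> * w"
  proof -
    have "(L - x)^2 + 16 * L^2 \<le> (5*L - x)^2"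
      using Lx by (simp add: power2_eq_square algebra_simps)
    then have "\<epsilon> \<le> exp (- ((L - x)^2 + 16 * L^2) / (4 * t))"
      unfolding \<epsilon>_def by (rule exp_neg_div_antimono[OF t])
    also have "\<dots> = \<alpha> * w"
      using t by (simp add: \<alpha>_def w_def field_simps flip: exp_add)
    finally show ?thesis .
  qed
  have "\<alpha> * p \<le> \<beta>"
  proof -
    have "(L + x)^2 \<le> (L - x)^2 + 4 * L^2"
      using Lx by (simp add: power2_eq_square algebra_simps)
    then have "exp (- ((L - x)^2 + 4 * L^2) / (4 * t)) \<le> \<beta>"
      unfolding \<beta>_def by (rule exp_neg_div_antimono[OF t])
    moreover have "exp (- ((L - x)^2 + 4 * L^2) / (4 * t)) = \<alpha> * p"
      using t by (simp add: \<alpha>_def p_def field_simps flip: exp_add)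
    ultimately show ?thesis by simp
  qed
  then have "\<alpha> * w * (1 + p) \<le> (\<alpha> + \<beta>) * w"
    using pos by (simp add: algebra_simps mult_right_mono)
  then have "\<alpha> * w \<le> (\<alpha> + \<beta>) * (w / (1 + p))"
    using pos by (simp add: field_simps)
  moreover have "0 \<le> (\<alpha> + \<beta>) * (w / (1 + p))"
    using pos by simp
  ultimately show ?thesis
    using \<open>\<gamma> \<le> \<alpha>\<close> \<open>\<epsilon> \<le> \<alpha> * w\<close> pos
    unfolding H_mixed_sup_weight_def boundary_decay_def
    by (fold \<alpha>_def \<beta>_def \<gamma>_def \<epsilon>_def w_def p_def) (simp add: algebra_simps)
qed

lemma H_mixed_sup_weight_sq_le_small_ratio:
  assumes t: "0 < t" and L: "0 < L" and x: "\<bar>x\<bar> \<le> L" and u: "L^2 / t \<le> 2/5"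
  shows "4 * L * heat_kernel t 0 * (H_mixed_sup_weight L x t)^2 \<le> (boundary_decay L x t)^2"
proof -
  define D where "D = 1 + exp (- 4 * (L^2 / t)) / (1 + exp (- (L^2 / t)))"
  have "(4 * L * heat_kernel t 0 * D^2)^2 = (4 * (L^2 / t) * D^4) / pi"
    using t L by (simp add: heat_kernel_0 power_mult_distrib power_divide real_sqrt_mult field_simps
        flip: power_mult)
  also have "\<dots> \<le> 3 / pi"
  proof (rule divide_right_mono)
    show "4 * (L^2 / t) * D^4 \<le> 3"
      unfolding D_def using t u by (intro small_ratio_estimate) auto
  qed simp
  also have "\<dots> \<le> 1^2"
    using pi_gt3 by simp
  finally have LQD: "4 * L * heat_kernel t 0 * D^2 \<le> 1"
    by (rule power2_le_imp_le) simp
  have "(H_mixed_sup_weight L x t)^2 \<le> (boundary_decay L x t * D)^2"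
    using H_mixed_sup_weight_le_boundary_decay_mult[OF t x]
    by (intro power_mono H_mixed_sup_weight_nonneg) (simp add: D_def)
  then have "4 * L * heat_kernel t 0 * (H_mixed_sup_weight L x t)^2
      \<le> 4 * L * heat_kernel t 0 * (boundary_decay L x t * D)^2"
    using L heat_kernel_nonneg[of t 0] t by (intro mult_left_mono) auto
  also have "\<dots> = (4 * L * heat_kernel t 0 * D^2) * (boundary_decay L x t)^2"
    by (simp add: power_mult_distrib)
  also have "\<dots> \<le> (boundary_decay L x t)^2"
    using mult_right_mono[OF LQD zero_le_power2[of "boundary_decay L x t"]] by simp
  finally show ?thesis .
qed

lemma set_integral_square_le_bound_mult_abs:
  fixes f :: "real \<Rightarrow> real"
  assumes int: "set_integrable lborel {a..b} (\<lambda>y. (f y)^2)"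
    and bound: "\<And>y. y \<in> {a..b} \<Longrightarrow> \<bar>f y\<bar> \<le> B"
  shows "(LINT y:{a..b}|lborel. (f y)^2) \<le> B * (LINT y:{a..b}|lborel. \<bar>f y\<bar>)"
proof -
  have "set_integrable lborel {a..b} (\<lambda>y. \<bar>f y\<bar>)"
  proof (rule set_integrable_bound[OF borel_integrable_atLeastAtMost'[OF continuous_on_const[of _ B]]])
    have "(\<lambda>y. indicator {a..b} y *\<^sub>R (f y)^2) \<in> borel_measurable lborel"
      using int unfolding set_integrable_def by (rule borel_measurable_integrable)
    then have "(\<lambda>y. sqrt (indicator {a..b} y *\<^sub>R (f y)^2)) \<in> borel_measurable lborel"
      by (rule measurable_compose[OF _ borel_measurable_sqrt])
    moreover have "sqrt (indicator {a..b} y *\<^sub>R (f y)^2) = indicator {a..b} y *\<^sub>R \<bar>f y\<bar>" for y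
      by (simp add: indicator_def)
    ultimately show "set_borel_measurable lborel {a..b} (\<lambda>y. \<bar>f y\<bar>)"
      unfolding set_borel_measurable_def by simp
    show "AE y in lborel. y \<in> {a..b} \<longrightarrow> norm \<bar>f y\<bar> \<le> norm B"
      by (rule AE_I2) (use bound in force)
  qed
  moreover have "(f y)^2 \<le> B * \<bar>f y\<bar>" if "y \<in> {a..b}" for y
    using mult_right_mono[OF bound[OF that] abs_ge_zero[of "f y"]]
    by (simp add: power2_eq_square abs_mult_self_eq)
  ultimately have "(LINT y:{a..b}|lborel. (f y)^2) \<le> (LINT y:{a..b}|lborel. B * \<bar>f y\<bar>)"
    by (intro set_integral_mono[OF int]) auto
  then show ?thesis by simp
qed

text \<open>For \<open>L^2/t \<ge> 2/5\<close> the product \<open>sup |H| \<cdot> \<integral>|H|\<close> suffices; for smaller \<open>L^2/t\<close> we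
  have \<open>K = 1/2\<close> and use \<open>2L sup |H|^2\<close> instead.\<close>

lemma integral_H_mixed_sq_le:
  assumes t: "0 < t" and L: "0 < L" and x: "\<bar>x\<bar> \<le> L"
  shows "(LINT y:{-L..L}|lborel. (H_mixed L t x y)^2) \<le> K_const t x L * L2_bound_deriv L x t"
proof (rule set_integral_le_by_cases)
  assume int: "set_integrable lborel {-L..L} (\<lambda>y. (H_mixed L t x y)^2)"
  define Q m E E' where "Q = heat_kernel t 0" and "m = H_mixed_sup_weight L x t"
    and "E = boundary_decay L x t" and "E' = boundary_decay_deriv L x t"
  have nonneg: "0 \<le> Q" "0 \<le> m" "0 \<le> E" "0 \<le> E'" "0 \<le> K_const t x L"
    using t x by (simp_all add: Q_def m_def E_def E'_def heat_kernel_nonneg H_mixed_sup_weight_nonneg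
        boundary_decay_nonneg boundary_decay_deriv_nonneg K_const_nonneg)
  have sup: "\<bar>H_mixed L t x y\<bar> \<le> Q * m" if "y \<in> {-L..L}" for y
    unfolding Q_def m_def using that x by (intro abs_H_mixed_le_sup_weight[OF t L]) auto
  have deriv: "L2_bound_deriv L x t = Q * E * (E + 4 * t * E')"
    by (simp add: L2_bound_deriv_def Q_def E_def E'_def)
  consider "2/5 \<le> L^2 / t" | "L^2 / t \<le> 2/5" by linarith
  then show "(LINT y:{-L..L}|lborel. (H_mixed L t x y)^2) \<le> K_const t x L * L2_bound_deriv L x t"
  proof cases
    case 1
    have "(LINT y:{-L..L}|lborel. (H_mixed L t x y)^2) \<le> Q * m * (LINT y:{-L..L}|lborel. \<bar>H_mixed L t x y\<bar>)"
      by (rule set_integral_square_le_bound_mult_abs[OF int sup])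
    also have "\<dots> \<le> Q * m * (K_const t x L * E)"
      unfolding E_def using nonneg by (intro mult_left_mono integral_abs_H_mixed_le[OF t L x]) auto
    also have "\<dots> \<le> Q * (E + 4 * t * E') * (K_const t x L * E)"
      using H_mixed_sup_weight_le_large_ratio[OF t L x 1] nonneg
      by (intro mult_right_mono mult_left_mono) (auto simp: m_def E_def E'_def)
    finally show ?thesis
      by (simp add: deriv ac_simps)
  next
    case 2
    then have "L^2 \<le> t" using t by (simp add: field_simps)
    then have K: "K_const t x L = 1/2" using K_const_eq_half[OF _ L] x by auto
    have "(LINT y:{-L..L}|lborel. (H_mixed L t x y)^2) \<le> (LINT y:{-L..L}|lborel. (Q * m)^2)"
      using sup nonneg
      by (intro set_integral_mono[OF int] borel_integrable_atLeastAtMost' continuous_on_const)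
        (auto simp: abs_le_square_iff[symmetric])
    also have "\<dots> = (Q / 2) * (4 * L * Q * m^2)"
      using L by (simp add: set_integral_const power2_eq_square)
    also have "\<dots> \<le> (Q / 2) * E^2"
      using H_mixed_sup_weight_sq_le_small_ratio[OF t L x 2] nonneg
      by (intro mult_left_mono) (auto simp: Q_def m_def E_def)
    also have "\<dots> \<le> 1/2 * (Q * E * (E + 4 * t * E'))"
      using nonneg t by (simp add: power2_eq_square distrib_left)
    finally show ?thesis
      by (simp add: K deriv)
  qed
qed (use t x in \<open>simp add: K_const_nonneg L2_bound_deriv_nonneg\<close>)

lemma time_integral_H_mixed_sq_le:
  assumes t: "0 < t" and L: "0 < L" and x: "\<bar>x\<bar> \<le> L"
  shows "(LINT s:{0..t}|lborel. (LINT y:{-L..L}|lborel. (H_mixed L s x y)^2))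
           \<le> K_const t x L * L2_bound L x t"
proof (rule set_integral_le_by_cases)
  let ?F = "\<lambda>s. LINT y:{-L..L}|lborel. (H_mixed L s x y)^2"
  assume int: "set_integrable lborel {0..t} ?F"
  have "(LINT s:{0..t}|lborel. ?F s) = (LINT s:{0<..<t}|lborel. ?F s)"
    using interval_integral_Icc[of 0 t ?F] t by (simp add: interval_lebesgue_integral_def)
  also have "\<dots> \<le> (LINT s:{0<..<t}|lborel. K_const t x L * L2_bound_deriv L x s)"
  proof (rule set_integral_mono)
    show "set_integrable lborel {0<..<t} ?F"
      by (rule set_integrable_subset[OF int]) auto
    show "set_integrable lborel {0<..<t} (\<lambda>s. K_const t x L * L2_bound_deriv L x s)"
      using set_integral_L2_bound_deriv(1)[OF t] by simp
    fix s assume s: "s \<in> {0<..<t}"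
    then have "?F s \<le> K_const s x L * L2_bound_deriv L x s"
      using integral_H_mixed_sq_le[OF _ L x] by simp
    also have "\<dots> \<le> K_const t x L * L2_bound_deriv L x s"
      using s x by (intro mult_right_mono K_const_mono L2_bound_deriv_nonneg) auto
    finally show "?F s \<le> K_const t x L * L2_bound_deriv L x s" .
  qed
  also have "\<dots> = K_const t x L * L2_bound L x t"
    using set_integral_L2_bound_deriv(2)[OF t] by simp
  finally show "(LINT s:{0..t}|lborel. ?F s) \<le> K_const t x L * L2_bound L x t" .
qed (use t x in \<open>simp add: K_const_nonneg L2_bound_def\<close>)

theorem lemma5p3:
  fixes T L t x :: real
  assumes "T > 0" and "L > 0" and "0 < t" and "t \<le> T"
    and "-L \<le> x" and "x \<le> L"
  defines "E \<equiv> exp (- ((L - x)^2) / (4 * t)) + exp (- ((L + x)^2) / (4 * t))"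
  shows "(LINT y:{-L..L}|lborel. \<bar>H_mixed L t x y\<bar>) \<le> K_const t x L * E \<and>
         (LINT s:{0..t}|lborel. (LINT y:{-L..L}|lborel. \<bar>H_mixed L s x y\<bar>))
           \<le> t * K_const t x L * E \<and>
         (LINT s:{0..t}|lborel. (LINT y:{-L..L}|lborel. (H_mixed L s x y)^2))
           \<le> sqrt (t / pi) * K_const t x L * E^2"
proof -
  have x: "\<bar>x\<bar> \<le> L" using assms(5,6) by simp
  have E: "E = boundary_decay L x t" by (simp add: E_def boundary_decay_def)
  show ?thesis
    using integral_abs_H_mixed_le[OF assms(3,2) x] time_integral_abs_H_mixed_le[OF assms(3,2) x]
      time_integral_H_mixed_sq_le[OF assms(3,2) x]
    unfolding E L2_bound_def by (simp add: ac_simps)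
qed

end
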